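(* Let $r\in\mathbb{Z}$, let $P(r)$ be the lower-triangular matrix with $(n,k)$ entry $[x^n]\,\frac{1+rx^2}{1+x^2}\left(\frac{x}{1+x^2}\right)^k$, let $M(r)=P(r)^{-1}$, and let $s_n(r)=\sum_{k=0}^n M(r)_{n,k}$ be the row sums of $M(r)$. Then the Hankel transform of $s_n(r)$ is $$H_n(r):=\det\big(s_{i+j}(r)\big)_{0\le i,j\le n}= r^n U_n\left(\frac{\frac{1}{r}-1}{2}\right)\quad\text{for all } n\ge 0,$$ where $U_n$ is the Chebyshev polynomial of the second kind and the right-hand side is understood as the polynomial in $r$ it defines.
   Context: $[x^n]h(x)$ denotes the coefficient of $x^n$ in $h(x)$. $U_n$ is the Chebyshev polynomial of the second kind ($U_0=1$, $U_1(y)=2y$, $U_{n}(y)=2yU_{n-1}(y)-U_{n-2}(y)$); $r^nU_n\left(\frac{1/r-1}{2}\right)$ is a polynomial in $r$ (beginning $1,\ 1-r,\ 1-2r,\ r^3+r^2-3r+1,\ldots$). $M(r)$ is the moment matrix of the restricted Chebyshev–Boubaker polynomials, equal to the Riordan array $\left(\frac{\sqrt{1-4x^2}(r-1)+r+1}{2(r+x^2(r-1)^2)}, \frac{1-\sqrt{1-4x^2}}{2x}\right)$. *)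

theory Defs
  imports "Jordan_Normal_Form.Determinant" "HOL-Computational_Algebra.Formal_Power_Series"
    "HOL-Computational_Algebra.Polynomial"
begin

definition Pmat :: "int \<Rightarrow> nat \<Rightarrow> nat \<Rightarrow> rat" where
  "Pmat r n k = fps_nth ((1 + fps_const (of_int r) * fps_X ^ 2) * inverse (1 + fps_X ^ 2)
                         * (fps_X * inverse (1 + fps_X ^ 2)) ^ k) n"

fun chebU :: "nat \<Rightarrow> rat poly" where
  "chebU 0 = 1"
| "chebU (Suc 0) = [:0, 2:]"
| "chebU (Suc (Suc n)) = [:0, 2:] * chebU (Suc n) - chebU n"

text \<open>The polynomial in r defined by r^n U_n((1/r - 1)/2): writing U_n(y) = sum_k c_k y^k
  (k <= n), it is sum_k c_k r^(n-k) ((1-r)/2)^k.\<close>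
definition chebU_rpoly :: "nat \<Rightarrow> rat poly" where
  "chebU_rpoly n = (\<Sum>k\<le>n. smult (coeff (chebU n) k) ([:0, 1:] ^ (n - k) * [:1/2, -1/2:] ^ k))"

end

theory Submission
  imports Defs
begin

text \<open>
  The Hankel matrix \<open>H = (s (i + j))\<close> and \<open>P H P\<^sup>T\<close> have the same determinant, \<open>P\<close> being lower
  unitriangular. The columns \<open>c\<^sub>k\<close> of the Riordan array \<open>P\<close> satisfy \<open>(1 + x\<^sup>2) c\<^sub>k\<^sub>+\<^sub>1 = x c\<^sub>k\<close>,
  and \<open>P s = 1\<close> because \<open>s\<close> is the vector of row sums of \<open>P\<^sup>-\<^sup>1\<close>; together these determine
  \<open>P H P\<^sup>T\<close> in closed form. Mixed backward differences, a second unimodular congruence, turn it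
  into a tridiagonal matrix with diagonal \<open>1, 1 - r, 1 - r, \<dots>\<close> and off-diagonal \<open>0, r, r, \<dots>\<close>,
  whose leading minors obey \<open>D\<^sub>n\<^sub>+\<^sub>2 = (1 - r) D\<^sub>n\<^sub>+\<^sub>1 - r\<^sup>2 D\<^sub>n\<close>, the recurrence of
  \<open>r\<^sup>n U\<^sub>n((1/r - 1)/2)\<close>.
\<close>

lemma fps_nth_one_plus_X2_mult:
  "fps_nth ((1 + fps_X ^ 2) * f) n = fps_nth f n + (if 2 \<le> n then fps_nth f (n - 2) else (0::'a::comm_ring_1))"
  by (simp add: distrib_right fps_X_power_mult_nth)

lemma one_plus_X2_times_inverse: "(1 + fps_X ^ 2 :: 'a::field fps) * inverse (1 + fps_X ^ 2) = 1"
  by (rule inverse_mult_eq_1') simp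

lemma Pmat_column_gf:
  "Abs_fps (\<lambda>n. Pmat r n k) =
     (1 + fps_const (of_int r) * fps_X ^ 2) * inverse (1 + fps_X ^ 2) * (fps_X * inverse (1 + fps_X ^ 2)) ^ k"
  by (simp add: Pmat_def fps_nth_inverse)

lemma Pmat_column_0_gf:
  "(1 + fps_X ^ 2) * Abs_fps (\<lambda>n. Pmat r n 0) = 1 + fps_const (of_int r) * fps_X ^ 2"
proof -
  have "(1 + fps_X ^ 2) * Abs_fps (\<lambda>n. Pmat r n 0) =
      (1 + fps_const (of_int r) * fps_X ^ 2) * ((1 + fps_X ^ 2) * inverse (1 + fps_X ^ 2))"
    unfolding Pmat_column_gf by (simp add: ac_simps)
  then show ?thesis by (simp add: one_plus_X2_times_inverse)
qed

lemma Pmat_column_Suc_gf: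
  "(1 + fps_X ^ 2) * Abs_fps (\<lambda>n. Pmat r n (Suc k)) = fps_X * Abs_fps (\<lambda>n. Pmat r n k)"
proof -
  have "(1 + fps_X ^ 2) * Abs_fps (\<lambda>n. Pmat r n (Suc k)) =
      fps_X * Abs_fps (\<lambda>n. Pmat r n k) * ((1 + fps_X ^ 2) * inverse (1 + fps_X ^ 2))"
    unfolding Pmat_column_gf by (simp add: ac_simps)
  then show ?thesis by (simp add: one_plus_X2_times_inverse)
qed

lemma Pmat_Suc_Suc_Suc: "Pmat r (Suc (Suc n)) (Suc k) + Pmat r n (Suc k) = Pmat r (Suc n) k"
  using arg_cong[OF Pmat_column_Suc_gf[of r k], of "\<lambda>f. fps_nth f (Suc (Suc n))"]
  by (simp add: fps_nth_one_plus_X2_mult)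

lemma Pmat_1_0: "Pmat r (Suc 0) 0 = 0"
  using arg_cong[OF Pmat_column_0_gf[of r], of "\<lambda>f. fps_nth f 1"]
  by (simp add: fps_nth_one_plus_X2_mult fps_X_power_mult_right_nth)

lemma Pmat_Suc_Suc_0: "Pmat r (Suc (Suc n)) 0 + Pmat r n 0 = (if n = 0 then of_int r else 0)"
  using arg_cong[OF Pmat_column_0_gf[of r], of "\<lambda>f. fps_nth f (Suc (Suc n))"]
  by (simp add: fps_nth_one_plus_X2_mult fps_X_power_mult_right_nth)

lemma Pmat_eq_X_power_mult:
  "Pmat r n k = fps_nth (fps_X ^ k *
     ((1 + fps_const (of_int r) * fps_X ^ 2) * inverse (1 + fps_X ^ 2) ^ Suc k)) n"
  unfolding Pmat_def by (simp add: power_mult_distrib ac_simps)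

lemma Pmat_upper: "n < k \<Longrightarrow> Pmat r n k = 0"
  by (simp add: Pmat_eq_X_power_mult fps_X_power_mult_nth fps_nth_power_0)

lemma Pmat_diag: "Pmat r n n = 1"
  by (simp add: Pmat_eq_X_power_mult fps_X_power_mult_nth fps_nth_power_0)

definition Pmat_apply :: "int \<Rightarrow> (nat \<Rightarrow> rat) \<Rightarrow> nat \<Rightarrow> rat" where
  "Pmat_apply r g n = (\<Sum>k\<le>n. Pmat r n k * g k)"

lemma Pmat_apply_eq_sum_lessThan: "n < N \<Longrightarrow> Pmat_apply r g n = (\<Sum>k<N. Pmat r n k * g k)"
  unfolding Pmat_apply_def by (rule sum.mono_neutral_left) (auto simp: Pmat_upper)

lemma Pmat_apply_add: "Pmat_apply r (\<lambda>k. f k + g k) n = Pmat_apply r f n + Pmat_apply r g n"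
  by (simp add: Pmat_apply_def distrib_left sum.distrib)

lemma Pmat_apply_cmult: "Pmat_apply r (\<lambda>k. c * f k) n = c * Pmat_apply r f n"
  by (simp add: Pmat_apply_def sum_distrib_left ac_simps)

lemma Pmat_apply_0: "Pmat_apply r g 0 = g 0"
  by (simp add: Pmat_apply_def Pmat_diag)

lemma Pmat_apply_1: "Pmat_apply r g (Suc 0) = g (Suc 0)"
  by (simp add: Pmat_apply_def Pmat_diag Pmat_1_0)

lemma Pmat_apply_Suc_Suc:
  "Pmat_apply r g (Suc (Suc n)) + Pmat_apply r g n =
     (if n = 0 then of_int r * g 0 else 0) + Pmat_apply r (\<lambda>k. g (Suc k)) (Suc n)"
proof -
  have "Pmat_apply r g n = (\<Sum>k\<le>Suc (Suc n). Pmat r n k * g k)"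
    unfolding Pmat_apply_def by (rule sum.mono_neutral_left) (auto simp: Pmat_upper)
  then have "Pmat_apply r g (Suc (Suc n)) + Pmat_apply r g n =
      (\<Sum>k\<le>Suc (Suc n). (Pmat r (Suc (Suc n)) k + Pmat r n k) * g k)"
    by (simp add: Pmat_apply_def distrib_right sum.distrib)
  also have "\<dots> = (if n = 0 then of_int r * g 0 else 0) + Pmat_apply r (\<lambda>k. g (Suc k)) (Suc n)"
    by (subst sum.atMost_Suc_shift)
      (simp add: Pmat_apply_def Pmat_Suc_Suc_0 Pmat_Suc_Suc_Suc del: sum.atMost_Suc)
  finally show ?thesis .
qed

definition hankel_congr :: "int \<Rightarrow> (nat \<Rightarrow> rat) \<Rightarrow> nat \<Rightarrow> nat \<Rightarrow> rat" where
  "hankel_congr r h i j = Pmat_apply r (\<lambda>b. Pmat_apply r (\<lambda>a. h (a + b)) i) j"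

lemma hankel_congr_commute: "hankel_congr r h i j = hankel_congr r h j i"
  unfolding hankel_congr_def Pmat_apply_def sum_distrib_left
  by (subst sum.swap) (simp add: ac_simps)

lemma hankel_congr_0_left: "hankel_congr r h 0 j = Pmat_apply r h j"
  by (simp add: hankel_congr_def Pmat_apply_0)

lemma hankel_congr_1_left: "hankel_congr r h (Suc 0) j = hankel_congr r (\<lambda>m. h (Suc m)) 0 j"
  by (simp add: hankel_congr_def Pmat_apply_0 Pmat_apply_1)

lemma hankel_congr_Suc_Suc_left:
  "hankel_congr r h (Suc (Suc i)) j + hankel_congr r h i j =
     (if i = 0 then of_int r * Pmat_apply r h j else 0) + hankel_congr r (\<lambda>m. h (Suc m)) (Suc i) j"
proof -
  have column: "Pmat_apply r (\<lambda>a. h (a + b)) (Suc (Suc i)) + Pmat_apply r (\<lambda>a. h (a + b)) i =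
      (if i = 0 then of_int r * h b else 0) + Pmat_apply r (\<lambda>a. h (Suc a + b)) (Suc i)" for b
    using Pmat_apply_Suc_Suc[of r "\<lambda>a. h (a + b)" i] by (cases "i = 0") simp_all
  have "hankel_congr r h (Suc (Suc i)) j + hankel_congr r h i j =
      Pmat_apply r (\<lambda>b. (if i = 0 then of_int r * h b else 0)
        + Pmat_apply r (\<lambda>a. h (Suc a + b)) (Suc i)) j"
    by (simp add: hankel_congr_def column flip: Pmat_apply_add)
  then show ?thesis
    by (cases "i = 0") (simp_all add: hankel_congr_def Pmat_apply_add Pmat_apply_cmult Pmat_apply_def)
qed

lemma Pmat_apply_row_sums_of_inverse:
  assumes M_lower: "\<And>n k. n < k \<Longrightarrow> M n k = 0"
    and M_inv: "\<And>n k. (\<Sum>j\<le>n. Pmat r n j * M j k) = (if n = k then 1 else 0)"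
  shows "Pmat_apply r (\<lambda>j. \<Sum>k\<le>j. M j k) n = 1"
proof -
  have "Pmat_apply r (\<lambda>j. \<Sum>k\<le>j. M j k) n = (\<Sum>j\<le>n. \<Sum>k\<le>n. Pmat r n j * M j k)"
    unfolding Pmat_apply_def sum_distrib_left
    by (intro sum.cong refl sum.mono_neutral_left) (auto simp: M_lower)
  also have "\<dots> = (\<Sum>k\<le>n. if n = k then 1 else 0)"
    by (subst sum.swap) (simp add: M_inv)
  finally show ?thesis by simp
qed

definition hankel_congr_formula :: "int \<Rightarrow> nat \<Rightarrow> nat \<Rightarrow> rat" where
  "hankel_congr_formula r i j =
     (if i = 0 \<or> j = 0 then 1
      else of_nat (min i j) + 1 + (of_nat (min i j) - 1) * of_int r - (if i = j then of_int r else 0))"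

context
  fixes r :: int and s :: "nat \<Rightarrow> rat"
  assumes Pmat_apply_s: "\<And>n. Pmat_apply r s n = 1"
begin

lemma hankel_congr_0_left_eq_1: "hankel_congr r s 0 j = 1"
  by (simp add: hankel_congr_0_left Pmat_apply_s)

lemma hankel_congr_0_right_eq_1: "hankel_congr r s i 0 = 1"
  using hankel_congr_0_left_eq_1 hankel_congr_commute by metis

lemma hankel_congr_shift:
  "hankel_congr r (\<lambda>m. s (Suc m)) (Suc i) j =
     hankel_congr r s (Suc (Suc i)) j + hankel_congr r s i j - (if i = 0 then of_int r else 0)"
  using hankel_congr_Suc_Suc_left[of r s i j] by (simp add: Pmat_apply_s)

lemma hankel_congr_1_Suc: "hankel_congr r s (Suc 0) (Suc j) = 2 - (if j = 0 then of_int r else 0)"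
  using hankel_congr_1_left[of r s "Suc j"] hankel_congr_commute[of r "\<lambda>m. s (Suc m)" 0 "Suc j"]
    hankel_congr_shift[of j 0]
  by (simp add: hankel_congr_0_right_eq_1)

text \<open>Eliminating the shifted sequence between the row recurrence and its transpose.\<close>

lemma hankel_congr_Suc_Suc_Suc:
  "hankel_congr r s (Suc (Suc i)) (Suc j) =
     hankel_congr r s (Suc i) (Suc (Suc j)) + hankel_congr r s (Suc i) j - hankel_congr r s i (Suc j)
     + (if i = 0 then of_int r else 0) - (if j = 0 then of_int r else 0)"
  using hankel_congr_shift[of i "Suc j"] hankel_congr_shift[of j "Suc i"]
    hankel_congr_commute[of r "\<lambda>m. s (Suc m)" "Suc i" "Suc j"]
    hankel_congr_commute[of r s "Suc i"] hankel_congr_commute[of r s _ "Suc j"]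
  by (simp add: algebra_simps)

lemma hankel_congr_eq_formula: "hankel_congr r s i j = hankel_congr_formula r i j"
proof (induction i arbitrary: j rule: less_induct)
  case (less i)
  consider "i = 0" | "i = Suc 0" | i' where "i = Suc (Suc i')"
    by (metis not0_implies_Suc)
  then show ?case
  proof cases
    case 1
    then show ?thesis by (simp add: hankel_congr_0_left_eq_1 hankel_congr_formula_def)
  next
    case 2
    then show ?thesis
      by (cases j) (auto simp: hankel_congr_0_right_eq_1 hankel_congr_1_Suc hankel_congr_formula_def)
  next
    case 3
    then show ?thesis
      by (cases j) (auto simp: hankel_congr_0_right_eq_1 hankel_congr_Suc_Suc_Suc less
          hankel_congr_formula_def min_def algebra_simps)
  qed
qed

end

lemma mat_congruence_eq:
  "mat N N (\<lambda>(i, j). f i j) * mat N N (\<lambda>(i, j). g i j) * transpose_mat (mat N N (\<lambda>(i, j). f i j)) =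
     mat N N (\<lambda>(i, j). \<Sum>b<N. (\<Sum>a<N. f i a * g a b) * f j b :: 'a :: comm_ring_1)"
  by (rule eq_matI) (auto simp: scalar_prod_def atLeast0LessThan)

lemma det_congruence_unimodular:
  fixes A B :: "'a :: comm_ring_1 mat"
  assumes "A \<in> carrier_mat N N" and "B \<in> carrier_mat N N" and "det A = 1"
  shows "det (A * B * transpose_mat A) = det B"
  using assms by (simp add: det_mult[of _ N] det_transpose)

lemma det_lower_unitriangular:
  assumes "\<And>i j. i < j \<Longrightarrow> f i j = 0" and "\<And>i. f i i = (1 :: 'a :: comm_ring_1)"
  shows "det (mat N N (\<lambda>(i, j). f i j)) = 1"
proof -
  have "diag_mat (mat N N (\<lambda>(i, j). f i j)) = replicate N 1"
    by (auto simp: diag_mat_def assms(2) intro!: nth_equalityI)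
  then show ?thesis
    by (subst det_lower_triangular[of N]) (auto simp: assms(1))
qed

lemma det_hankel_eq_det_hankel_congr:
  "det (mat N N (\<lambda>(i, j). h (i + j))) = det (mat N N (\<lambda>(i, j). hankel_congr r h i j))"
proof -
  let ?P = "mat N N (\<lambda>(i, j). Pmat r i j)"
  have "?P * mat N N (\<lambda>(i, j). h (i + j)) * transpose_mat ?P = mat N N (\<lambda>(i, j). hankel_congr r h i j)"
    unfolding mat_congruence_eq
    by (rule eq_matI) (simp_all add: hankel_congr_def Pmat_apply_eq_sum_lessThan sum_distrib_left
        sum_distrib_right ac_simps)
  moreover have "det ?P = 1"
    by (rule det_lower_unitriangular) (simp_all add: Pmat_upper Pmat_diag)
  ultimately show ?thesis
    using det_congruence_unimodular[of ?P N "mat N N (\<lambda>(i, j). h (i + j))"] by simp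
qed

definition mixed_backward_diff :: "(nat \<Rightarrow> nat \<Rightarrow> 'a :: ab_group_add) \<Rightarrow> nat \<Rightarrow> nat \<Rightarrow> 'a" where
  "mixed_backward_diff f i j =
     f i j - (if 0 < i then f (i - 1) j else 0) - (if 0 < j then f i (j - 1) else 0)
     + (if 0 < i \<and> 0 < j then f (i - 1) (j - 1) else 0)"

lemma det_mixed_backward_diff:
  fixes f :: "nat \<Rightarrow> nat \<Rightarrow> 'a :: comm_ring_1"
  shows "det (mat N N (\<lambda>(i, j). f i j)) = det (mat N N (\<lambda>(i, j). mixed_backward_diff f i j))"
proof -
  define e :: "nat \<Rightarrow> nat \<Rightarrow> 'a" where "e i a = (if a = i then 1 else if Suc a = i then -1 else 0)" for i a
  let ?E = "mat N N (\<lambda>(i, j). e i j)"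
  have diff: "(\<Sum>a<N. e i a * g a) = g i - (if 0 < i then g (i - 1) else 0)" if "i < N" for i g
  proof -
    have "(\<Sum>a<N. e i a * g a) = (\<Sum>a<N. if a = i then g a else 0) - (\<Sum>a<N. if a = i - 1 \<and> 0 < i then g a else 0)"
      unfolding sum_subtractf[symmetric] by (rule sum.cong) (auto simp: e_def)
    then show ?thesis using that by simp
  qed
  have entry: "(\<Sum>b<N. (\<Sum>a<N. e i a * f a b) * e j b) = mixed_backward_diff f i j"
    if "i < N" and "j < N" for i j
  proof -
    have "(\<Sum>b<N. (\<Sum>a<N. e i a * f a b) * e j b) =
        (\<Sum>b<N. (f i b - (if 0 < i then f (i - 1) b else 0)) * e j b)"
      by (simp only: diff[OF \<open>i < N\<close>])
    also have "\<dots> = (\<Sum>b<N. e j b * (f i b - (if 0 < i then f (i - 1) b else 0)))"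
      by (simp only: mult.commute)
    also have "\<dots> = mixed_backward_diff f i j"
      unfolding diff[OF \<open>j < N\<close>] mixed_backward_diff_def by auto
    finally show ?thesis .
  qed
  have "?E * mat N N (\<lambda>(i, j). f i j) * transpose_mat ?E = mat N N (\<lambda>(i, j). mixed_backward_diff f i j)"
    unfolding mat_congruence_eq by (rule eq_matI) (simp_all add: entry)
  moreover have "det ?E = 1"
    by (rule det_lower_unitriangular) (simp_all add: e_def)
  ultimately show ?thesis
    using det_congruence_unimodular[of ?E N "mat N N (\<lambda>(i, j). f i j)"] by simp
qed

definition hankel_jacobi :: "int \<Rightarrow> nat \<Rightarrow> nat \<Rightarrow> rat" where
  "hankel_jacobi r i j =
     (if i = 0 \<and> j = 0 then 1
      else if i = j then 1 - of_int r
      else if (i = Suc j \<and> 0 < j) \<or> (j = Suc i \<and> 0 < i) then of_int r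
      else 0)"

lemma mixed_backward_diff_hankel_congr_formula:
  "mixed_backward_diff (hankel_congr_formula r) i j = hankel_jacobi r i j"
proof -
  consider "i = j" | "i = Suc j" | "j = Suc i" | "Suc j < i" | "Suc i < j" by arith
  then show ?thesis
    by cases (cases i; cases j; cases "i - 1"; cases "j - 1";
        auto simp: mixed_backward_diff_def hankel_jacobi_def hankel_congr_formula_def min_def algebra_simps)+
qed

definition homog_eval :: "nat \<Rightarrow> 'a :: comm_semiring_1 poly \<Rightarrow> 'a \<Rightarrow> 'a \<Rightarrow> 'a" where
  "homog_eval n p x y = (\<Sum>k\<le>n. coeff p k * x ^ (n - k) * y ^ k)"

lemma poly_chebU_rpoly: "poly (chebU_rpoly n) x = homog_eval n (chebU n) x (1/2 - x/2)"
  by (simp add: chebU_rpoly_def homog_eval_def poly_sum mult.assoc)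

lemma homog_eval_diff:
  "homog_eval n (p - q) x y = homog_eval n p x y - homog_eval n q x (y :: 'a :: comm_ring_1)"
  by (simp add: homog_eval_def algebra_simps sum_subtractf)

lemma homog_eval_smult: "homog_eval n (smult c p) x y = c * homog_eval n p x y"
  by (simp add: homog_eval_def sum_distrib_left mult.assoc)

lemma homog_eval_pCons_0: "homog_eval (Suc n) (pCons 0 p) x y = y * homog_eval n p x y"
  unfolding homog_eval_def
  by (subst sum.atMost_Suc_shift) (simp add: sum_distrib_left ac_simps del: sum.atMost_Suc)

lemma homog_eval_Suc_Suc:
  assumes "degree p \<le> n"
  shows "homog_eval (Suc (Suc n)) p x y = x ^ 2 * homog_eval n p x y"
proof -
  have "homog_eval (Suc (Suc n)) p x y = (\<Sum>k\<le>n. coeff p k * x ^ (Suc (Suc n) - k) * y ^ k)"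
    unfolding homog_eval_def using assms
    by (intro sum.mono_neutral_right) (auto simp: coeff_eq_0)
  also have "\<dots> = x ^ 2 * homog_eval n p x y"
    unfolding homog_eval_def sum_distrib_left
    by (intro sum.cong refl) (simp add: Suc_diff_le power2_eq_square mult_ac)
  finally show ?thesis .
qed

lemma degree_chebU: "degree (chebU n) \<le> n"
  by (induction n rule: chebU.induct) (auto intro: degree_diff_le order.trans[OF degree_mult_le])

lemma homog_eval_chebU_Suc_Suc:
  "homog_eval (Suc (Suc n)) (chebU (Suc (Suc n))) x y =
     2 * y * homog_eval (Suc n) (chebU (Suc n)) x y - x ^ 2 * homog_eval n (chebU n) x y"
proof -
  have "[:0, 2:] * chebU (Suc n) = pCons 0 (smult 2 (chebU (Suc n)))" by simp
  then show ?thesis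
    by (simp add: homog_eval_diff homog_eval_pCons_0 homog_eval_smult homog_eval_Suc_Suc[OF degree_chebU])
qed

lemma det_mat_delete_tridiagonal:
  fixes f :: "nat \<Rightarrow> nat \<Rightarrow> 'a :: comm_ring_1"
  assumes "\<And>i j. Suc i < j \<Longrightarrow> f i j = 0"
  shows "det (mat_delete (mat (Suc (Suc m)) (Suc (Suc m)) (\<lambda>(i, j). f i j)) (Suc m) m) =
     f m (Suc m) * det (mat m m (\<lambda>(i, j). f i j))"
proof -
  define B where "B = mat (Suc m) (Suc m) (\<lambda>(i, j). f i (if j < m then j else Suc j))"
  have B_eq: "mat_delete (mat (Suc (Suc m)) (Suc (Suc m)) (\<lambda>(i, j). f i j)) (Suc m) m = B"
    unfolding B_def by (rule eq_matI) (auto simp: mat_delete_def)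
  have B: "B \<in> carrier_mat (Suc m) (Suc m)" unfolding B_def by simp
  have minor: "mat_delete B m m = mat m m (\<lambda>(i, j). f i j)"
    by (rule eq_matI) (auto simp: B_def mat_delete_def)
  have "det B = (\<Sum>i<Suc m. B $$ (i, m) * cofactor B i m)"
    by (rule laplace_expansion_column[OF B]) simp
  also have "\<dots> = B $$ (m, m) * cofactor B m m"
    by (simp add: B_def assms)
  finally show ?thesis
    by (simp add: B_eq cofactor_def minor) (simp add: B_def)
qed

lemma det_tridiagonal_Suc_Suc:
  fixes f :: "nat \<Rightarrow> nat \<Rightarrow> 'a :: comm_ring_1"
  assumes "\<And>i j. Suc i < j \<Longrightarrow> f i j = 0" and "\<And>i j. Suc j < i \<Longrightarrow> f i j = 0"
  shows "det (mat (Suc (Suc m)) (Suc (Suc m)) (\<lambda>(i, j). f i j)) =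
     f (Suc m) (Suc m) * det (mat (Suc m) (Suc m) (\<lambda>(i, j). f i j))
     - f (Suc m) m * f m (Suc m) * det (mat m m (\<lambda>(i, j). f i j))"
proof -
  define A where "A = mat (Suc (Suc m)) (Suc (Suc m)) (\<lambda>(i, j). f i j)"
  have A: "A \<in> carrier_mat (Suc (Suc m)) (Suc (Suc m))" unfolding A_def by simp
  have minor: "mat_delete A (Suc m) (Suc m) = mat (Suc m) (Suc m) (\<lambda>(i, j). f i j)"
    by (rule eq_matI) (auto simp: A_def mat_delete_def)
  have "det A = (\<Sum>j<Suc (Suc m). A $$ (Suc m, j) * cofactor A (Suc m) j)"
    by (rule laplace_expansion_row[OF A]) simp
  also have "\<dots> = A $$ (Suc m, m) * cofactor A (Suc m) m + A $$ (Suc m, Suc m) * cofactor A (Suc m) (Suc m)"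
    by (simp add: A_def assms(2))
  finally show ?thesis
    using det_mat_delete_tridiagonal[of f m, OF assms(1)]
    by (simp add: cofactor_def minor) (simp add: A_def algebra_simps)
qed

lemma det_hankel_jacobi:
  "det (mat (Suc n) (Suc n) (\<lambda>(i, j). hankel_jacobi r i j)) = homog_eval n (chebU n) (of_int r) (1/2 - of_int r/2)"
proof (induction n rule: chebU.induct)
  case 1
  show ?case by (subst det_single) (auto simp: hankel_jacobi_def homog_eval_def)
next
  case 2
  have "det (mat (Suc (Suc 0)) (Suc (Suc 0)) (\<lambda>(i, j). hankel_jacobi r i j)) =
      hankel_jacobi r (Suc 0) (Suc 0) * det (mat (Suc 0) (Suc 0) (\<lambda>(i, j). hankel_jacobi r i j))
      - hankel_jacobi r (Suc 0) 0 * hankel_jacobi r 0 (Suc 0) * det (mat 0 0 (\<lambda>(i, j). hankel_jacobi r i j))"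
    by (rule det_tridiagonal_Suc_Suc) (auto simp: hankel_jacobi_def)
  also have "det (mat (Suc 0) (Suc 0) (\<lambda>(i, j). hankel_jacobi r i j)) = 1"
    by (subst det_single) (auto simp: hankel_jacobi_def)
  finally show ?case by (simp add: hankel_jacobi_def homog_eval_def)
next
  case (3 n)
  have "det (mat (Suc (Suc (Suc n))) (Suc (Suc (Suc n))) (\<lambda>(i, j). hankel_jacobi r i j)) =
      hankel_jacobi r (Suc (Suc n)) (Suc (Suc n)) * det (mat (Suc (Suc n)) (Suc (Suc n)) (\<lambda>(i, j). hankel_jacobi r i j))
      - hankel_jacobi r (Suc (Suc n)) (Suc n) * hankel_jacobi r (Suc n) (Suc (Suc n))
        * det (mat (Suc n) (Suc n) (\<lambda>(i, j). hankel_jacobi r i j))"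
    by (rule det_tridiagonal_Suc_Suc) (auto simp: hankel_jacobi_def)
  also have "\<dots> = (1 - of_int r) * homog_eval (Suc n) (chebU (Suc n)) (of_int r) (1/2 - of_int r/2)
      - of_int r ^ 2 * homog_eval n (chebU n) (of_int r) (1/2 - of_int r/2)"
    using 3 by (simp add: hankel_jacobi_def power2_eq_square)
  also have "\<dots> = homog_eval (Suc (Suc n)) (chebU (Suc (Suc n))) (of_int r) (1/2 - of_int r/2)"
    by (simp add: homog_eval_chebU_Suc_Suc algebra_simps del: chebU.simps)
  finally show ?case .
qed

theorem mainTheorem6:
  fixes r :: int and M :: "nat \<Rightarrow> nat \<Rightarrow> rat" and s :: "nat \<Rightarrow> rat"
  assumes M_lower: "\<And>n k. n < k \<Longrightarrow> M n k = 0"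
    and M_inv: "\<And>n k. (\<Sum>j\<le>n. Pmat r n j * M j k) = (if n = k then 1 else 0)"
    and s_def: "\<And>n. s n = (\<Sum>k\<le>n. M n k)"
  shows "\<forall>n. det (mat (n + 1) (n + 1) (\<lambda>(i, j). s (i + j))) = poly (chebU_rpoly n) (of_int r)"
proof
  fix n
  have "s = (\<lambda>j. \<Sum>k\<le>j. M j k)" using s_def by auto
  then have Pmat_apply_s: "Pmat_apply r s m = 1" for m
    using Pmat_apply_row_sums_of_inverse[OF M_lower M_inv] by simp
  have "det (mat (n + 1) (n + 1) (\<lambda>(i, j). s (i + j))) =
      det (mat (n + 1) (n + 1) (\<lambda>(i, j). hankel_congr_formula r i j))"
    unfolding det_hankel_eq_det_hankel_congr[of _ s r] hankel_congr_eq_formula[OF Pmat_apply_s] ..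
  also have "\<dots> = det (mat (Suc n) (Suc n) (\<lambda>(i, j). hankel_jacobi r i j))"
    unfolding det_mixed_backward_diff[of _ "hankel_congr_formula r"]
      mixed_backward_diff_hankel_congr_formula by simp
  also have "\<dots> = poly (chebU_rpoly n) (of_int r)"
    unfolding det_hankel_jacobi poly_chebU_rpoly ..
  finally show "det (mat (n + 1) (n + 1) (\<lambda>(i, j). s (i + j))) = poly (chebU_rpoly n) (of_int r)" .
qed

end
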